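(* Let $L>0$, let $p,w\in C^2([0,L])$ be positive-valued functions with $p^{-1},w^{-1}\in L^\infty(]0,L[)$, and let $q\in C([0,L])$ be nonnegative-valued. Define $y(x)=\int_0^x\sqrt{w(s)/p(s)}\,ds$ for $x\in[0,L]$, $B=\int_0^L\sqrt{w(s)/p(s)}\,ds$, let $x(y)$ be the inverse of $y:[0,L]\to[0,B]$, and set $f(y)=(w(x(y))p(x(y)))^{1/4}$ and $Q(y)=f''(y)/f(y)+q(x(y))/w(x(y))$ for $y\in[0,B]$. For $\lambda>0$ define $$K_Qu(y)=\int_0^yQ(z)\sin(\sqrt\lambda(y-z))u(z)\,dz,\qquad y\in\,]0,B[,$$ and let $\|K_Q\|_t$ denote the operator norm of $K_Q$ as a map from $L^t(]0,B[)$ to $L^t(]0,B[)$. Then for every $\lambda>0$, $$\|K_Q\|_2^2\le\frac{B^2}{4}\|Q\|_\infty^2\qquad\text{and}\qquad \|K_Q\|_4^4\le\left(\frac{B^3}{12}+\frac{5B}{32\lambda}+\frac{5}{32\lambda^{3/2}}\right)\|Q\|_4^4 .$$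
   Context: $\|Q\|_\infty$ and $\|Q\|_4$ are the norms of $Q$ in $L^\infty(]0,B[)$ and $L^4(]0,B[)$ (Lebesgue measure). *)

theory Defs
  imports "HOL-Analysis.Analysis" "HOL-Probability.Essential_Supremum"
begin

definition C2_on :: "real \<Rightarrow> real \<Rightarrow> (real \<Rightarrow> real) \<Rightarrow> bool" where
  "C2_on a b f \<longleftrightarrow> (\<exists>f' f''.
      (\<forall>x\<in>{a..b}. (f has_real_derivative f' x) (at x within {a..b})) \<and>
      (\<forall>x\<in>{a..b}. (f' has_real_derivative f'' x) (at x within {a..b})) \<and>
      continuous_on {a..b} f'')"

definition Linf_norm :: "real set \<Rightarrow> (real \<Rightarrow> real) \<Rightarrow> ereal" where
  "Linf_norm S u = esssup (restrict_space lborel S) (\<lambda>x. ereal \<bar>u x\<bar>)"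

definition in_Lp :: "real \<Rightarrow> real set \<Rightarrow> (real \<Rightarrow> real) \<Rightarrow> bool" where
  "in_Lp t S u \<longleftrightarrow> u \<in> borel_measurable (restrict_space lborel S) \<and>
     set_integrable lborel S (\<lambda>x. \<bar>u x\<bar> powr t)"

definition Lp_norm :: "real \<Rightarrow> real set \<Rightarrow> (real \<Rightarrow> real) \<Rightarrow> real" where
  "Lp_norm t S u = (set_lebesgue_integral lborel S (\<lambda>x. \<bar>u x\<bar> powr t)) powr (1 / t)"

definition op_norm :: "real \<Rightarrow> real set \<Rightarrow> ((real \<Rightarrow> real) \<Rightarrow> (real \<Rightarrow> real)) \<Rightarrow> ereal" where
  "op_norm t S K = Sup {ereal (Lp_norm t S (K u) / Lp_norm t S u) | u.
                          in_Lp t S u \<and> Lp_norm t S u \<noteq> 0}"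

definition liou_y :: "(real \<Rightarrow> real) \<Rightarrow> (real \<Rightarrow> real) \<Rightarrow> real \<Rightarrow> real" where
  "liou_y p w x = integral {0..x} (\<lambda>s. sqrt (w s / p s))"

definition liou_x :: "real \<Rightarrow> (real \<Rightarrow> real) \<Rightarrow> (real \<Rightarrow> real) \<Rightarrow> real \<Rightarrow> real" where
  "liou_x L p w = inv_into {0..L} (liou_y p w)"

definition liou_f :: "real \<Rightarrow> (real \<Rightarrow> real) \<Rightarrow> (real \<Rightarrow> real) \<Rightarrow> real \<Rightarrow> real" where
  "liou_f L p w y = (w (liou_x L p w y) * p (liou_x L p w y)) powr (1/4)"

definition liou_Q :: "real \<Rightarrow> (real \<Rightarrow> real) \<Rightarrow> (real \<Rightarrow> real) \<Rightarrow> (real \<Rightarrow> real) \<Rightarrow> real \<Rightarrow> real" where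
  "liou_Q L p w q y = deriv (deriv (liou_f L p w)) y / liou_f L p w y
                      + q (liou_x L p w y) / w (liou_x L p w y)"

definition K_op :: "(real \<Rightarrow> real) \<Rightarrow> real \<Rightarrow> (real \<Rightarrow> real) \<Rightarrow> real \<Rightarrow> real" where
  "K_op Q lam u y = set_lebesgue_integral lborel {0..y} (\<lambda>z. Q z * sin (sqrt lam * (y - z)) * u z)"

end

(* After the Liouville change of variable, Q is the restriction to ]0,B[ of a continuous
   function on [0,B]: the inverse X of y satisfies X' = sqrt (p/w) o X, so the second derivative
   of f = (w p)^(1/4) o X has the form F o X with F continuous on [0,L].  Hence Q is bounded and
   lies in L^4.

   For fixed y, Cauchy-Schwarz in z gives |K_Q u (y)|^2 <= ||Q||_inf^2 ||u||_2^2 S(y), where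
   S(y) = int_0^y sin^2 (sqrt lam (y - z)) dz = y/2 - sin (2 sqrt lam y) / (4 sqrt lam);
   using it twice gives |K_Q u (y)|^4 <= ||Q||_4^4 ||u||_4^4 S(y)^2.  The primitives of S and S^2
   are explicit, and bounding their trigonometric terms by 1 yields the constants B^2/4 and
   B^3/12 + 5B/(32 lam) + 5/(32 lam^(3/2)). *)

theory Submission
  imports Defs
begin

section \<open>C^1 and C^2 functions on an interval\<close>

definition C1_on :: "real \<Rightarrow> real \<Rightarrow> (real \<Rightarrow> real) \<Rightarrow> bool" where
  "C1_on a b f \<longleftrightarrow> (\<exists>f'.
      (\<forall>x\<in>{a..b}. (f has_real_derivative f' x) (at x within {a..b})) \<and> continuous_on {a..b} f')"

lemma C2_on_iff_C1_on_derivative: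
  "C2_on a b f \<longleftrightarrow>
    (\<exists>f'. (\<forall>x\<in>{a..b}. (f has_real_derivative f' x) (at x within {a..b})) \<and> C1_on a b f')"
  unfolding C2_on_def C1_on_def by blast

lemma C1_on_imp_continuous_on: "C1_on a b f \<Longrightarrow> continuous_on {a..b} f"
  unfolding C1_on_def by (blast intro: DERIV_continuous_on)

lemma C2_on_imp_C1_on: "C2_on a b f \<Longrightarrow> C1_on a b f"
  unfolding C2_on_iff_C1_on_derivative C1_on_def[of _ _ f] by (blast dest: C1_on_imp_continuous_on)

lemma C1_on_const: "C1_on a b (\<lambda>x. c)"
  unfolding C1_on_def by (auto intro!: exI[of _ "\<lambda>x. 0"] derivative_eq_intros)

lemma C1_on_add:
  assumes "C1_on a b f" "C1_on a b g"
  shows "C1_on a b (\<lambda>x. f x + g x)"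
proof -
  from assms obtain f' g' where
    "\<forall>x\<in>{a..b}. (f has_real_derivative f' x) (at x within {a..b})" "continuous_on {a..b} f'"
    "\<forall>x\<in>{a..b}. (g has_real_derivative g' x) (at x within {a..b})" "continuous_on {a..b} g'"
    unfolding C1_on_def by blast
  then show ?thesis
    unfolding C1_on_def
    by (intro exI[of _ "\<lambda>x. f' x + g' x"]) (auto intro!: derivative_eq_intros continuous_intros)
qed

lemma C1_on_mult:
  assumes "C1_on a b f" "C1_on a b g"
  shows "C1_on a b (\<lambda>x. f x * g x)"
proof -
  from assms obtain f' g' where
    f': "\<forall>x\<in>{a..b}. (f has_real_derivative f' x) (at x within {a..b})" "continuous_on {a..b} f'" and
    g': "\<forall>x\<in>{a..b}. (g has_real_derivative g' x) (at x within {a..b})" "continuous_on {a..b} g'"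
    unfolding C1_on_def by blast
  have "continuous_on {a..b} f" "continuous_on {a..b} g"
    using assms by (simp_all add: C1_on_imp_continuous_on)
  with f' g' show ?thesis
    unfolding C1_on_def
    by (intro exI[of _ "\<lambda>x. f' x * g x + f x * g' x"])
       (auto intro!: derivative_eq_intros continuous_intros)
qed

lemma C1_on_powr:
  assumes "C1_on a b f" "\<forall>x\<in>{a..b}. 0 < f x"
  shows "C1_on a b (\<lambda>x. f x powr r)"
proof -
  from assms obtain f' where
    f': "\<forall>x\<in>{a..b}. (f has_real_derivative f' x) (at x within {a..b})" "continuous_on {a..b} f'"
    unfolding C1_on_def by blast
  have "continuous_on {a..b} f"
    using assms by (simp add: C1_on_imp_continuous_on)
  with f' assms(2) show ?thesis
    unfolding C1_on_def
    by (intro exI[of _ "\<lambda>x. r * f x powr (r - 1) * f' x"])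
       (auto intro!: derivative_eq_intros continuous_intros)
qed

lemma C1_on_divide:
  assumes "C1_on a b f" "C1_on a b g" "\<forall>x\<in>{a..b}. g x \<noteq> 0"
  shows "C1_on a b (\<lambda>x. f x / g x)"
proof -
  from assms obtain f' g' where
    f': "\<forall>x\<in>{a..b}. (f has_real_derivative f' x) (at x within {a..b})" "continuous_on {a..b} f'" and
    g': "\<forall>x\<in>{a..b}. (g has_real_derivative g' x) (at x within {a..b})" "continuous_on {a..b} g'"
    unfolding C1_on_def by blast
  have "continuous_on {a..b} f" "continuous_on {a..b} g"
    using assms by (simp_all add: C1_on_imp_continuous_on)
  with f' g' assms(3) show ?thesis
    unfolding C1_on_def
    by (intro exI[of _ "\<lambda>x. (f' x * g x - f x * g' x) / (g x)\<^sup>2"])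
       (auto intro!: derivative_eq_intros continuous_intros simp: field_simps power2_eq_square)
qed

lemma C1_on_sqrt:
  assumes "C1_on a b f" "\<forall>x\<in>{a..b}. 0 < f x"
  shows "C1_on a b (\<lambda>x. sqrt (f x))"
proof -
  from assms obtain f' where
    f': "\<forall>x\<in>{a..b}. (f has_real_derivative f' x) (at x within {a..b})" "continuous_on {a..b} f'"
    unfolding C1_on_def by blast
  have "continuous_on {a..b} f"
    using assms by (simp add: C1_on_imp_continuous_on)
  with f' assms(2) show ?thesis
    unfolding C1_on_def
    by (intro exI[of _ "\<lambda>x. f' x / (2 * sqrt (f x))"])
       (auto intro!: derivative_eq_intros continuous_intros simp: field_simps)
qed

lemma C2_on_mult:
  assumes "C2_on a b f" "C2_on a b g"
  shows "C2_on a b (\<lambda>x. f x * g x)"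
proof -
  from assms obtain f' g' where
    f': "\<forall>x\<in>{a..b}. (f has_real_derivative f' x) (at x within {a..b})" "C1_on a b f'" and
    g': "\<forall>x\<in>{a..b}. (g has_real_derivative g' x) (at x within {a..b})" "C1_on a b g'"
    unfolding C2_on_iff_C1_on_derivative by blast
  have "C1_on a b f" "C1_on a b g"
    using assms by (simp_all add: C2_on_imp_C1_on)
  with f' g' show ?thesis
    unfolding C2_on_iff_C1_on_derivative
    by (intro exI[of _ "\<lambda>x. f' x * g x + f x * g' x"])
       (auto intro!: derivative_eq_intros C1_on_add C1_on_mult)
qed

lemma C2_on_powr:
  assumes "C2_on a b f" "\<forall>x\<in>{a..b}. 0 < f x"
  shows "C2_on a b (\<lambda>x. f x powr r)"
proof -
  from assms obtain f' where
    f': "\<forall>x\<in>{a..b}. (f has_real_derivative f' x) (at x within {a..b})" "C1_on a b f'"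
    unfolding C2_on_iff_C1_on_derivative by blast
  have "C1_on a b f"
    using assms by (simp add: C2_on_imp_C1_on)
  with f' assms(2) show ?thesis
    unfolding C2_on_iff_C1_on_derivative
    by (intro exI[of _ "\<lambda>x. r * f x powr (r - 1) * f' x"])
       (auto intro!: derivative_eq_intros C1_on_mult C1_on_powr C1_on_const)
qed

lemma DERIV_compose_interior:
  fixes \<phi> X :: "real \<Rightarrow> real"
  assumes "\<forall>x\<in>{a..b}. (\<phi> has_real_derivative \<phi>' x) (at x within {a..b})"
    and "(X has_real_derivative X') (at y)" and "X y \<in> {a<..<b}"
  shows "((\<lambda>y. \<phi> (X y)) has_real_derivative \<phi>' (X y) * X') (at y)"
proof -
  have "(\<phi> has_real_derivative \<phi>' (X y)) (at (X y) within {a..b})"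
    using assms(1,3) by auto
  then have "(\<phi> has_real_derivative \<phi>' (X y)) (at (X y))"
    using assms(3) at_within_interior[of "X y" "{a..b}"] by simp
  then show ?thesis
    using assms(2) by (rule DERIV_chain2)
qed

lemma second_deriv_compose:
  fixes h r X :: "real \<Rightarrow> real" and S :: "real set"
  assumes h: "C2_on a b h" and r: "C1_on a b r" and "open S"
    and X': "\<And>y. y \<in> S \<Longrightarrow> (X has_real_derivative r (X y)) (at y)"
    and X: "\<And>y. y \<in> S \<Longrightarrow> X y \<in> {a<..<b}"
  shows "\<exists>F. continuous_on {a..b} F \<and> (\<forall>y\<in>S. deriv (deriv (\<lambda>y. h (X y))) y = F (X y))"
proof -
  obtain h' where h': "\<forall>x\<in>{a..b}. (h has_real_derivative h' x) (at x within {a..b})" "C1_on a b h'"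
    using h unfolding C2_on_iff_C1_on_derivative by blast
  have "C1_on a b (\<lambda>x. h' x * r x)"
    using h'(2) r by (rule C1_on_mult)
  then obtain F' where
    F': "\<forall>x\<in>{a..b}. ((\<lambda>x. h' x * r x) has_real_derivative F' x) (at x within {a..b})"
      "continuous_on {a..b} F'"
    unfolding C1_on_def by blast
  have h'X: "deriv (\<lambda>y. h (X y)) y = h' (X y) * r (X y)" if "y \<in> S" for y
    using DERIV_compose_interior[OF h'(1) X'[OF that] X[OF that]] by (rule DERIV_imp_deriv)
  have "deriv (deriv (\<lambda>y. h (X y))) y = F' (X y) * r (X y)" if y: "y \<in> S" for y
  proof (rule DERIV_imp_deriv)
    have "((\<lambda>y. h' (X y) * r (X y)) has_real_derivative F' (X y) * r (X y)) (at y)"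
      using DERIV_compose_interior[OF F'(1) X'[OF y] X[OF y]] .
    then show "(deriv (\<lambda>y. h (X y)) has_real_derivative F' (X y) * r (X y)) (at y)"
      by (rule has_field_derivative_transform_within_open[OF _ \<open>open S\<close> y]) (simp add: h'X)
  qed
  moreover have "continuous_on {a..b} (\<lambda>x. F' x * r x)"
    using F'(2) C1_on_imp_continuous_on[OF r] by (intro continuous_intros)
  ultimately show ?thesis
    by blast
qed

section \<open>The Liouville transformation\<close>

lemma strict_mono_on_primitive:
  fixes g :: "real \<Rightarrow> real"
  assumes g: "continuous_on {a..b} g" "\<forall>x\<in>{a..b}. 0 < g x"
  shows "strict_mono_on {a..b} (\<lambda>x. integral {a..x} g)"
proof (rule strict_mono_onI)
  fix x y assume xy: "x \<in> {a..b}" "y \<in> {a..b}" "x < y"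
  show "integral {a..x} g < integral {a..y} g"
  proof (rule DERIV_pos_imp_increasing_open[OF \<open>x < y\<close>])
    fix t assume "x < t" "t < y"
    then have "t \<in> interior {a..b}"
      using xy by auto
    then show "\<exists>d. ((\<lambda>x. integral {a..x} g) has_real_derivative d) (at t) \<and> 0 < d"
      using integral_has_real_derivative[OF g(1)] g(2) interior_subset
      by (metis at_within_interior subsetD)
  next
    have "continuous_on {a..b} (\<lambda>x. integral {a..x} g)"
      using integral_has_real_derivative[OF g(1)] by (rule DERIV_continuous_on)
    then show "continuous_on {x..y} (\<lambda>x. integral {a..x} g)"
      by (rule continuous_on_subset) (use xy in auto)
  qed
qed

lemma primitive_bij_betw:
  fixes g :: "real \<Rightarrow> real"
  assumes g: "continuous_on {a..b} g" "\<forall>x\<in>{a..b}. 0 < g x" and "a \<le> b"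
  defines "Y \<equiv> \<lambda>x. integral {a..x} g"
  shows "bij_betw Y {a..b} {0..Y b}"
proof (rule bij_betw_imageI)
  have mono: "strict_mono_on {a..b} Y"
    unfolding Y_def using g by (rule strict_mono_on_primitive)
  then show "inj_on Y {a..b}"
    by (rule strict_mono_on_imp_inj_on)
  have cont: "continuous_on {a..b} Y"
    unfolding Y_def using integral_has_real_derivative[OF g(1)] by (rule DERIV_continuous_on)
  have "Y a = 0"
    unfolding Y_def by simp
  show "Y ` {a..b} = {0..Y b}"
  proof
    show "Y ` {a..b} \<subseteq> {0..Y b}"
      using strict_mono_on_leD[OF mono, of a] strict_mono_on_leD[OF mono, of _ b] \<open>Y a = 0\<close>
      by fastforce
    show "{0..Y b} \<subseteq> Y ` {a..b}"
      using IVT'[of Y a _ b] cont \<open>Y a = 0\<close> \<open>a \<le> b\<close> by fastforce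
  qed
qed

lemma inverse_of_primitive:
  fixes g :: "real \<Rightarrow> real"
  assumes g: "continuous_on {a..b} g" "\<forall>x\<in>{a..b}. 0 < g x" and "a < b"
  defines "Y \<equiv> \<lambda>x. integral {a..x} g"
  defines "X \<equiv> inv_into {a..b} Y"
  shows "0 < Y b"
    and "continuous_on {0..Y b} X"
    and "\<forall>y\<in>{0..Y b}. X y \<in> {a..b}"
    and "\<forall>y\<in>{0<..<Y b}. X y \<in> {a<..<b}"
    and "\<forall>y\<in>{0<..<Y b}. (X has_real_derivative 1 / g (X y)) (at y)"
proof -
  have bij: "bij_betw Y {a..b} {0..Y b}"
    unfolding Y_def using g \<open>a < b\<close> by (intro primitive_bij_betw) auto
  have Yder: "\<forall>x\<in>{a..b}. (Y has_real_derivative g x) (at x within {a..b})"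
    unfolding Y_def using integral_has_real_derivative[OF g(1)] by blast
  have "Y a < Y b"
    using strict_mono_onD[OF strict_mono_on_primitive[OF g], of a b] \<open>a < b\<close>
    unfolding Y_def by simp
  then show "0 < Y b"
    by (simp add: Y_def)
  have XY: "\<forall>x\<in>{a..b}. X (Y x) = x"
    unfolding X_def using bij by (auto simp: bij_betw_def)
  have YX: "\<forall>y\<in>{0..Y b}. Y (X y) = y \<and> X y \<in> {a..b}"
    unfolding X_def using bij by (metis bij_betw_def f_inv_into_f inv_into_into)
  then show "\<forall>y\<in>{0..Y b}. X y \<in> {a..b}"
    by blast
  show contX: "continuous_on {0..Y b} X"
    using continuous_on_inv[OF DERIV_continuous_on[OF Yder[rule_format]] compact_Icc XY] bij
    by (simp add: bij_betw_def)
  have Xint: "X y \<in> {a<..<b}" if "y \<in> {0<..<Y b}" for y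
  proof -
    have "X y \<in> {a..b}" "Y (X y) = y"
      using YX that by auto
    moreover have "Y a = 0"
      unfolding Y_def by simp
    ultimately show ?thesis
      using that by (cases "X y = a \<or> X y = b") auto
  qed
  then show "\<forall>y\<in>{0<..<Y b}. X y \<in> {a<..<b}"
    by blast
  show "\<forall>y\<in>{0<..<Y b}. (X has_real_derivative 1 / g (X y)) (at y)"
  proof
    fix y assume y: "y \<in> {0<..<Y b}"
    have "(Y has_real_derivative g (X y)) (at (X y) within {a..b})"
      using Yder Xint[OF y] by auto
    then have "(Y has_real_derivative g (X y)) (at (X y))"
      using Xint[OF y] at_within_interior[of "X y" "{a..b}"] by simp
    moreover have "g (X y) \<noteq> 0"
      using g(2) Xint[OF y] by (simp add: less_imp_neq[symmetric])
    moreover have "isCont X y"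
      using contX y by (simp add: continuous_on_interior)
    ultimately have "(X has_real_derivative inverse (g (X y))) (at y)"
      using y YX by (intro DERIV_inverse_function[where a=0 and b="Y b"]) auto
    then show "(X has_real_derivative 1 / g (X y)) (at y)"
      by (simp add: divide_inverse)
  qed
qed

lemma liou_x_properties:
  fixes L :: real and p w :: "real \<Rightarrow> real"
  assumes "0 < L" "continuous_on {0..L} p" "continuous_on {0..L} w"
    and p: "\<forall>x\<in>{0..L}. 0 < p x" and w: "\<forall>x\<in>{0..L}. 0 < w x"
  defines "B \<equiv> liou_y p w L" and "X \<equiv> liou_x L p w"
  shows "0 < B" and "continuous_on {0..B} X" and "\<forall>y\<in>{0..B}. X y \<in> {0..L}"
    and "\<forall>y\<in>{0<..<B}. X y \<in> {0<..<L}"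
    and "\<forall>y\<in>{0<..<B}. (X has_real_derivative 1 / sqrt (w (X y) / p (X y))) (at y)"
proof -
  have g: "continuous_on {0..L} (\<lambda>s. sqrt (w s / p s))" "\<forall>x\<in>{0..L}. 0 < sqrt (w x / p x)"
    using assms(2,3) p w by (auto intro!: continuous_intros)
  have Y: "liou_y p w = (\<lambda>x. integral {0..x} (\<lambda>s. sqrt (w s / p s)))"
    by (simp add: liou_y_def fun_eq_iff)
  note inv = inverse_of_primitive[OF g \<open>0 < L\<close>, folded Y liou_x_def X_def]
  show "0 < B" "continuous_on {0..B} X" "\<forall>y\<in>{0..B}. X y \<in> {0..L}"
    "\<forall>y\<in>{0<..<B}. X y \<in> {0<..<L}"
    "\<forall>y\<in>{0<..<B}. (X has_real_derivative 1 / sqrt (w (X y) / p (X y))) (at y)"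
    using inv by (simp_all add: B_def liou_y_def)
qed

lemma liou_Q_continuous_extension:
  fixes L :: real and p w q :: "real \<Rightarrow> real"
  assumes "0 < L" and p2: "C2_on 0 L p" and w2: "C2_on 0 L w"
    and p: "\<forall>x\<in>{0..L}. 0 < p x" and w: "\<forall>x\<in>{0..L}. 0 < w x"
    and q: "continuous_on {0..L} q"
  defines "B \<equiv> liou_y p w L"
  shows "\<exists>Qc. continuous_on {0..B} Qc \<and> (\<forall>y\<in>{0<..<B}. liou_Q L p w q y = Qc y)"
proof -
  define X where "X = liou_x L p w"
  define h where "h x = (w x * p x) powr (1/4)" for x
  have p1: "C1_on 0 L p" and w1: "C1_on 0 L w"
    using p2 w2 by (simp_all add: C2_on_imp_C1_on)
  note X = liou_x_properties[OF \<open>0 < L\<close> p1[THEN C1_on_imp_continuous_on]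
      w1[THEN C1_on_imp_continuous_on] p w, folded B_def X_def]
  have "C2_on 0 L h"
    unfolding h_def using p w by (intro C2_on_powr C2_on_mult p2 w2) auto
  moreover have "C1_on 0 L (\<lambda>x. 1 / sqrt (w x / p x))"
    using p w by (intro C1_on_divide C1_on_const C1_on_sqrt p1 w1) auto
  ultimately have "\<exists>F. continuous_on {0..L} F
      \<and> (\<forall>y\<in>{0<..<B}. deriv (deriv (\<lambda>y. h (X y))) y = F (X y))"
    by (rule second_deriv_compose[OF _ _ open_greaterThanLessThan]) (use X(4,5) in auto)
  then obtain F where F: "continuous_on {0..L} F"
    "\<forall>y\<in>{0<..<B}. deriv (deriv (\<lambda>y. h (X y))) y = F (X y)"
    by blast
  define G where "G x = F x / h x + q x / w x" for x
  have "continuous_on {0..L} h"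
    using \<open>C2_on 0 L h\<close> by (simp add: C1_on_imp_continuous_on C2_on_imp_C1_on)
  moreover have "\<forall>x\<in>{0..L}. 0 < h x"
    using p w by (fastforce simp: h_def)
  ultimately have "continuous_on {0..L} G"
    unfolding G_def using F(1) q w w1[THEN C1_on_imp_continuous_on] by (intro continuous_intros) auto
  then have "continuous_on {0..B} (\<lambda>y. G (X y))"
    using X(2,3) by (auto intro: continuous_on_compose2)
  moreover have "liou_f L p w = (\<lambda>y. h (X y))"
    by (simp add: fun_eq_iff liou_f_def h_def X_def)
  then have "liou_Q L p w q y = G (X y)" if "y \<in> {0<..<B}" for y
    using F(2) that by (simp add: liou_Q_def G_def X_def)
  ultimately show ?thesis
    by blast
qed

section \<open>Lebesgue integrals and L^p norms\<close>

lemma set_integral_Ioo_of_has_integral: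
  fixes f :: "real \<Rightarrow> real"
  assumes "continuous_on {a..b} f" "(f has_integral I) {a..b}"
  shows "set_integrable lborel {a<..<b} f" and "(LINT x:{a<..<b}|lborel. f x) = I"
proof -
  show int: "set_integrable lborel {a<..<b} f"
    using borel_integrable_atLeastAtMost'[OF assms(1)] by (rule set_integrable_subset) auto
  have "(LINT x:{a<..<b}|lborel. f x) = integral {a<..<b} f"
    by (rule set_borel_integral_eq_integral(2)[OF int])
  also have "\<dots> = I"
    using assms(2) by (simp add: integral_open_interval_real[symmetric] integral_unique)
  finally show "(LINT x:{a<..<b}|lborel. f x) = I" .
qed

lemma abs_powr_numeral: "\<bar>x::real\<bar> powr numeral n = \<bar>x\<bar> ^ numeral n"
  using powr_realpow'[of "\<bar>x\<bar>" "numeral n"] by simp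

lemma set_integral_abs_powr_nonneg:
  fixes f :: "'a \<Rightarrow> real"
  shows "0 \<le> (LINT x:A|M. \<bar>f x\<bar> powr t)"
  unfolding set_lebesgue_integral_def
  by (rule Bochner_Integration.integral_nonneg) (simp add: indicator_def)

lemma set_integral_le_mult_bound:
  fixes f h :: "'a \<Rightarrow> real"
  assumes "set_integrable M A h" "\<And>x. x \<in> A \<Longrightarrow> f x \<le> c * h x" "\<And>x. x \<in> A \<Longrightarrow> 0 \<le> h x"
    and "0 \<le> c"
  shows "(LINT x:A|M. f x) \<le> c * (LINT x:A|M. h x)"
proof -
  have "set_integrable M A (\<lambda>x. c * h x)"
    using assms(1) by (rule set_integrable_mult_right)
  then have "(LINT x:A|M. f x) \<le> (LINT x:A|M. c * h x)"
    using assms(2-4) unfolding set_lebesgue_integral_def set_integrable_def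
    by (intro integral_mono') (auto simp: indicator_def)
  then show ?thesis
    by simp
qed

lemma set_nn_integral_eq_set_lebesgue_integral:
  fixes f :: "'a \<Rightarrow> real"
  assumes "set_integrable M A f" "\<And>x. x \<in> A \<Longrightarrow> 0 \<le> f x"
  shows "(\<integral>\<^sup>+x\<in>A. ennreal (f x) \<partial>M) = ennreal (LINT x:A|M. f x)"
proof -
  have "(\<integral>\<^sup>+x. ennreal (indicator A x *\<^sub>R f x) \<partial>M) = ennreal (LINT x:A|M. f x)"
    using assms unfolding set_integrable_def set_lebesgue_integral_def
    by (intro nn_integral_eq_integral) (auto simp: indicator_def)
  then show ?thesis
    by (simp add: nn_integral_set_ennreal mult.commute)
qed

lemma Cauchy_Schwarz_set_nn_integral:
  fixes f g :: "'a \<Rightarrow> real"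
  assumes [measurable]: "f \<in> borel_measurable M" "g \<in> borel_measurable M" "A \<in> sets M"
  shows "(\<integral>\<^sup>+x\<in>A. ennreal (\<bar>f x\<bar> * \<bar>g x\<bar>) \<partial>M)\<^sup>2
    \<le> (\<integral>\<^sup>+x\<in>A. ennreal ((f x)\<^sup>2) \<partial>M) * (\<integral>\<^sup>+x\<in>A. ennreal ((g x)\<^sup>2) \<partial>M)"
proof -
  have "(\<integral>\<^sup>+x. (ennreal \<bar>f x\<bar> * indicator A x) * (ennreal \<bar>g x\<bar> * indicator A x) \<partial>M)\<^sup>2
      \<le> (\<integral>\<^sup>+x. (ennreal \<bar>f x\<bar> * indicator A x)\<^sup>2 \<partial>M) * (\<integral>\<^sup>+x. (ennreal \<bar>g x\<bar> * indicator A x)\<^sup>2 \<partial>M)"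
    by (rule Cauchy_Schwarz_nn_integral) auto
  moreover have "(ennreal \<bar>f x\<bar> * indicator A x) * (ennreal \<bar>g x\<bar> * indicator A x)
      = ennreal (\<bar>f x\<bar> * \<bar>g x\<bar>) * indicator A x" for x
    by (simp split: split_indicator add: ennreal_mult)
  moreover have "(ennreal \<bar>h x\<bar> * indicator A x)\<^sup>2 = ennreal ((h x)\<^sup>2) * indicator A x" for h :: "'a \<Rightarrow> real" and x
    by (simp split: split_indicator add: ennreal_power)
  ultimately show ?thesis
    by simp
qed

lemma set_nn_integral_le_Lp_integral:
  fixes f :: "real \<Rightarrow> real"
  assumes "in_Lp t A f"
  shows "(\<integral>\<^sup>+z\<in>T. ennreal (\<bar>indicator A z * f z\<bar> powr t) \<partial>lborel)
    \<le> ennreal (LINT z:A|lborel. \<bar>f z\<bar> powr t)"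
proof -
  have "(\<integral>\<^sup>+z\<in>T. ennreal (\<bar>indicator A z * f z\<bar> powr t) \<partial>lborel)
      \<le> (\<integral>\<^sup>+z\<in>A. ennreal (\<bar>f z\<bar> powr t) \<partial>lborel)"
    by (intro nn_integral_mono) (simp split: split_indicator)
  also have "\<dots> = ennreal (LINT z:A|lborel. \<bar>f z\<bar> powr t)"
    using assms unfolding in_Lp_def by (intro set_nn_integral_eq_set_lebesgue_integral) auto
  finally show ?thesis .
qed

lemma in_Lp_of_continuous_extension:
  fixes f g :: "real \<Rightarrow> real"
  assumes f: "continuous_on {a..b} f" and fg: "\<forall>x\<in>{a<..<b}. g x = f x" and "0 < t"
  shows "in_Lp t {a<..<b} g"
proof -
  have "continuous_on {a<..<b} f"
    using f by (rule continuous_on_subset) auto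
  then have "continuous_on {a<..<b} g"
    by (rule continuous_on_eq) (use fg in auto)
  then have "g \<in> borel_measurable (restrict_space lborel {a<..<b})"
    by (auto dest: borel_measurable_continuous_on_restrict cong: measurable_cong_sets
             simp: sets_restrict_space)
  moreover have "set_integrable lborel {a<..<b} (\<lambda>x. \<bar>f x\<bar> powr t)"
    using f \<open>0 < t\<close>
    by (intro set_integrable_subset[OF borel_integrable_atLeastAtMost'])
       (auto intro!: continuous_intros continuous_on_powr')
  moreover have "set_integrable lborel {a<..<b} (\<lambda>x. \<bar>g x\<bar> powr t)
      \<longleftrightarrow> set_integrable lborel {a<..<b} (\<lambda>x. \<bar>f x\<bar> powr t)"
    using fg by (intro set_integrable_cong) auto
  ultimately show ?thesis
    unfolding in_Lp_def by blast
qed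

lemma AE_abs_le_Linf_norm:
  assumes "Linf_norm S f = ereal m" "S \<in> sets lborel"
  shows "AE x in lborel. x \<in> S \<longrightarrow> \<bar>f x\<bar> \<le> m"
proof -
  have "AE x in restrict_space lborel S. ereal \<bar>f x\<bar> \<le> Linf_norm S f"
    unfolding Linf_norm_def by (rule esssup_AE)
  then show ?thesis
    using assms by (simp add: AE_restrict_space_iff)
qed

lemma powr_inverse_power: "0 \<le> x \<Longrightarrow> 0 < n \<Longrightarrow> (x powr (1 / real n)) ^ n = x"
  by (simp add: powr_realpow'[symmetric] powr_powr)

lemma const_in_Lp:
  assumes "a < b"
  shows "in_Lp t {a<..<b} (\<lambda>_. 1)" and "Lp_norm t {a<..<b} (\<lambda>_. 1) \<noteq> 0"
proof -
  show "in_Lp t {a<..<b} (\<lambda>_. 1)"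
    using assms by (auto simp: in_Lp_def set_integrable_def intro!: integrable_real_indicator)
  have "(LINT x:{a<..<b}|lborel. 1::real) = b - a"
    using assms by (simp add: set_integral_const)
  then show "Lp_norm t {a<..<b} (\<lambda>_. 1) \<noteq> 0"
    using assms by (simp add: Lp_norm_def)
qed

lemma Lp_norm_le_if_integral_le:
  fixes u v :: "real \<Rightarrow> real"
  assumes "(LINT x:S|lborel. \<bar>v x\<bar> powr t) \<le> C * (LINT x:S|lborel. \<bar>u x\<bar> powr t)"
    and "0 \<le> C" "0 \<le> t"
  shows "Lp_norm t S v \<le> C powr (1 / t) * Lp_norm t S u"
proof -
  have "Lp_norm t S v \<le> (C * (LINT x:S|lborel. \<bar>u x\<bar> powr t)) powr (1 / t)"
    unfolding Lp_norm_def using assms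
    by (intro powr_mono2) (simp_all add: set_integral_abs_powr_nonneg)
  also have "\<dots> = C powr (1 / t) * Lp_norm t S u"
    unfolding Lp_norm_def using \<open>0 \<le> C\<close> by (simp add: powr_mult set_integral_abs_powr_nonneg)
  finally show ?thesis .
qed

lemma op_norm_pow_le:
  fixes K :: "(real \<Rightarrow> real) \<Rightarrow> real \<Rightarrow> real" and n :: nat and C :: real
  assumes "a < b" "0 < n" "0 \<le> C"
    and bound: "\<And>u. in_Lp n {a<..<b} u \<Longrightarrow>
      (LINT x:{a<..<b}|lborel. \<bar>K u x\<bar> powr n) \<le> C * (LINT x:{a<..<b}|lborel. \<bar>u x\<bar> powr n)"
  shows "op_norm n {a<..<b} K ^ n \<le> ereal C"
proof -
  let ?N = "Lp_norm n {a<..<b}"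
  have ratio: "?N (K u) / ?N u \<le> C powr (1 / n)" if u: "in_Lp n {a<..<b} u" "?N u \<noteq> 0" for u
  proof -
    have "?N (K u) \<le> C powr (1 / n) * ?N u"
      using bound[OF u(1)] \<open>0 \<le> C\<close> by (rule Lp_norm_le_if_integral_le) simp
    moreover have "0 < ?N u"
      using u(2) by (simp add: Lp_norm_def order_less_le)
    ultimately show ?thesis
      by (simp add: divide_le_eq)
  qed
  have "op_norm n {a<..<b} K \<le> ereal (C powr (1 / n))"
    unfolding op_norm_def
  proof (rule Sup_least)
    fix x assume "x \<in> {ereal (?N (K u) / ?N u) | u. in_Lp n {a<..<b} u \<and> ?N u \<noteq> 0}"
    then obtain u where "x = ereal (?N (K u) / ?N u)" "in_Lp n {a<..<b} u" "?N u \<noteq> 0"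
      by blast
    then show "x \<le> ereal (C powr (1 / n))"
      using ratio by simp
  qed
  moreover have "0 \<le> op_norm n {a<..<b} K"
  proof -
    have "ereal (?N (K (\<lambda>_. 1)) / ?N (\<lambda>_. 1)) \<le> op_norm n {a<..<b} K"
      unfolding op_norm_def using const_in_Lp[OF \<open>a < b\<close>] by (intro Sup_upper) blast
    moreover have "0 \<le> ?N (K (\<lambda>_. 1)) / ?N (\<lambda>_. 1)"
      by (simp add: Lp_norm_def)
    ultimately show ?thesis
      by (metis order_trans ereal_less_eq(5) zero_ereal_def)
  qed
  ultimately obtain r where r: "op_norm n {a<..<b} K = ereal r" "0 \<le> r" "r \<le> C powr (1 / n)"
    by (cases "op_norm n {a<..<b} K") auto
  then have "r ^ n \<le> (C powr (1 / n)) ^ n"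
    by (intro power_mono) auto
  then show ?thesis
    using r(1) powr_inverse_power[OF \<open>0 \<le> C\<close> \<open>0 < n\<close>] by simp
qed

section \<open>The sine kernel\<close>

definition sin_sq_mass :: "real \<Rightarrow> real \<Rightarrow> real" where
  "sin_sq_mass a y = y / 2 - sin (2 * a * y) / (4 * a)"

lemma has_integral_sin_sq:
  fixes a y :: real
  assumes "a \<noteq> 0" "0 \<le> y"
  shows "((\<lambda>z. (sin (a * (y - z)))\<^sup>2) has_integral sin_sq_mass a y) {0..y}"
proof -
  define F where "F z = z / 2 + sin (2 * a * (y - z)) / (4 * a)" for z
  have "((\<lambda>z. (sin (a * (y - z)))\<^sup>2) has_integral F y - F 0) {0..y}"
  proof (rule fundamental_theorem_of_calculus[OF \<open>0 \<le> y\<close>])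
    fix z
    have "(F has_real_derivative 1 / 2 + cos (2 * a * (y - z)) * (- (2 * a)) / (4 * a)) (at z)"
      unfolding F_def by (auto intro!: derivative_eq_intros)
    moreover have "1 / 2 + cos (2 * a * (y - z)) * (- (2 * a)) / (4 * a) = (sin (a * (y - z)))\<^sup>2"
    proof -
      have "cos (2 * a * (y - z)) = 1 - 2 * (sin (a * (y - z)))\<^sup>2"
        using cos_double_sin[of "a * (y - z)"] by (simp add: mult.assoc)
      then show ?thesis
        using \<open>a \<noteq> 0\<close> by (simp add: field_simps)
    qed
    ultimately show "(F has_vector_derivative (sin (a * (y - z)))\<^sup>2) (at z within {0..y})"
      by (simp add: has_real_derivative_iff_has_vector_derivative[symmetric] has_field_derivative_at_within)
  qed
  then show ?thesis
    by (simp add: F_def sin_sq_mass_def)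
qed

lemma sin_sq_mass_nonneg: "a \<noteq> 0 \<Longrightarrow> 0 \<le> y \<Longrightarrow> 0 \<le> sin_sq_mass a y"
  using has_integral_nonneg[OF has_integral_sin_sq] by auto

lemma set_nn_integral_sin_sq:
  assumes "a \<noteq> 0" "0 \<le> y"
  shows "(\<integral>\<^sup>+z\<in>{0..y}. ennreal ((sin (a * (y - z)))\<^sup>2) \<partial>lborel) = ennreal (sin_sq_mass a y)"
  using nn_integral_has_integral_lebesgue'[OF _ has_integral_sin_sq[OF assms]] by simp

lemma continuous_on_sin_sq_mass: "continuous_on S (sin_sq_mass a)"
  unfolding sin_sq_mass_def divide_inverse by (intro continuous_intros)

lemma has_integral_sin_sq_mass:
  fixes a B :: real
  assumes "a \<noteq> 0" "0 \<le> B"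
  shows "(sin_sq_mass a has_integral B\<^sup>2 / 4 + cos (2 * a * B) / (8 * a\<^sup>2) - 1 / (8 * a\<^sup>2)) {0..B}"
proof -
  define F where "F y = y\<^sup>2 / 4 + cos (2 * a * y) / (8 * a\<^sup>2)" for y
  have "(sin_sq_mass a has_integral F B - F 0) {0..B}"
  proof (rule fundamental_theorem_of_calculus[OF \<open>0 \<le> B\<close>])
    fix y
    have "(F has_real_derivative sin_sq_mass a y) (at y)"
      unfolding F_def sin_sq_mass_def using \<open>a \<noteq> 0\<close>
      by (auto intro!: derivative_eq_intros simp: field_simps power2_eq_square)
    then show "(F has_vector_derivative sin_sq_mass a y) (at y within {0..B})"
      by (simp add: has_real_derivative_iff_has_vector_derivative[symmetric] has_field_derivative_at_within)
  qed
  then show ?thesis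
    by (simp add: F_def)
qed

lemma has_integral_sin_sq_mass_squared:
  fixes a B :: real
  assumes "a \<noteq> 0" "0 \<le> B"
  shows "((\<lambda>y. (sin_sq_mass a y)\<^sup>2) has_integral
           B ^ 3 / 12 + B * cos (2 * a * B) / (8 * a\<^sup>2) - sin (2 * a * B) / (16 * a ^ 3)
             + B / (32 * a\<^sup>2) - sin (4 * a * B) / (128 * a ^ 3)) {0..B}"
proof -
  define F where "F y = y ^ 3 / 12 + y * cos (2 * a * y) / (8 * a\<^sup>2) - sin (2 * a * y) / (16 * a ^ 3)
      + y / (32 * a\<^sup>2) - sin (4 * a * y) / (128 * a ^ 3)" for y
  have "((\<lambda>y. (sin_sq_mass a y)\<^sup>2) has_integral F B - F 0) {0..B}"
  proof (rule fundamental_theorem_of_calculus[OF \<open>0 \<le> B\<close>])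
    fix y
    have "(F has_real_derivative 3 * y\<^sup>2 / 12
        + (cos (2 * a * y) + y * (- sin (2 * a * y) * (2 * a))) / (8 * a\<^sup>2)
        - cos (2 * a * y) * (2 * a) / (16 * a ^ 3) + 1 / (32 * a\<^sup>2)
        - cos (4 * a * y) * (4 * a) / (128 * a ^ 3)) (at y)"
      unfolding F_def using \<open>a \<noteq> 0\<close>
      by (auto intro!: derivative_eq_intros simp: field_simps eval_nat_numeral)
    moreover have "3 * y\<^sup>2 / 12
        + (cos (2 * a * y) + y * (- sin (2 * a * y) * (2 * a))) / (8 * a\<^sup>2)
        - cos (2 * a * y) * (2 * a) / (16 * a ^ 3) + 1 / (32 * a\<^sup>2)
        - cos (4 * a * y) * (4 * a) / (128 * a ^ 3) = (sin_sq_mass a y)\<^sup>2"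
    proof -
      have cos4: "cos (4 * a * y) = 1 - 2 * (sin (2 * a * y))\<^sup>2"
        using cos_double_sin[of "2 * a * y"] by (simp add: mult.assoc)
      show ?thesis
        unfolding cos4 sin_sq_mass_def using \<open>a \<noteq> 0\<close>
        by (simp add: field_simps power2_eq_square power3_eq_cube)
    qed
    ultimately show "(F has_vector_derivative (sin_sq_mass a y)\<^sup>2) (at y within {0..B})"
      by (simp add: has_real_derivative_iff_has_vector_derivative[symmetric] has_field_derivative_at_within)
  qed
  then show ?thesis
    by (simp add: F_def)
qed

lemma set_integral_sin_sq_mass_le:
  assumes "a \<noteq> 0" "0 \<le> B"
  shows "set_integrable lborel {0<..<B} (sin_sq_mass a)"
    and "(LINT y:{0<..<B}|lborel. sin_sq_mass a y) \<le> B\<^sup>2 / 4"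
proof -
  note I = set_integral_Ioo_of_has_integral[OF continuous_on_sin_sq_mass has_integral_sin_sq_mass[OF assms]]
  show "set_integrable lborel {0<..<B} (sin_sq_mass a)"
    by (fact I(1))
  have "cos (2 * a * B) / (8 * a\<^sup>2) \<le> 1 / (8 * a\<^sup>2)"
    by (intro divide_right_mono) auto
  then show "(LINT y:{0<..<B}|lborel. sin_sq_mass a y) \<le> B\<^sup>2 / 4"
    unfolding I(2) by simp
qed

lemma set_integral_sin_sq_mass_squared_le:
  assumes "0 < a" "0 \<le> B"
  shows "set_integrable lborel {0<..<B} (\<lambda>y. (sin_sq_mass a y)\<^sup>2)"
    and "(LINT y:{0<..<B}|lborel. (sin_sq_mass a y)\<^sup>2) \<le> B ^ 3 / 12 + 5 * B / (32 * a\<^sup>2) + 5 / (32 * a ^ 3)"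
proof -
  have "a \<noteq> 0"
    using \<open>0 < a\<close> by simp
  note I = set_integral_Ioo_of_has_integral[OF continuous_on_power[OF continuous_on_sin_sq_mass]
      has_integral_sin_sq_mass_squared[OF this \<open>0 \<le> B\<close>]]
  show "set_integrable lborel {0<..<B} (\<lambda>y. (sin_sq_mass a y)\<^sup>2)"
    by (fact I(1))
  have "B * cos (2 * a * B) / (8 * a\<^sup>2) \<le> B / (8 * a\<^sup>2)"
    using assms by (intro divide_right_mono) (auto intro: mult_left_le)
  moreover have "- sin (2 * a * B) / (16 * a ^ 3) \<le> 1 / (16 * a ^ 3)"
    using assms by (intro divide_right_mono) (use abs_sin_le_one[of "2 * a * B"] in \<open>auto simp: abs_le_iff\<close>)
  moreover have "- sin (4 * a * B) / (128 * a ^ 3) \<le> 1 / (128 * a ^ 3)"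
    using assms by (intro divide_right_mono) (use abs_sin_le_one[of "4 * a * B"] in \<open>auto simp: abs_le_iff\<close>)
  moreover have "B / (8 * a\<^sup>2) + B / (32 * a\<^sup>2) = 5 * B / (32 * a\<^sup>2)"
    using assms by (simp add: field_simps)
  moreover have "1 / (16 * a ^ 3) + 1 / (128 * a ^ 3) \<le> 5 / (32 * a ^ 3)"
    using assms by (simp add: field_simps)
  ultimately show "(LINT y:{0<..<B}|lborel. (sin_sq_mass a y)\<^sup>2)
      \<le> B ^ 3 / 12 + 5 * B / (32 * a\<^sup>2) + 5 / (32 * a ^ 3)"
    unfolding I(2) by linarith
qed

lemma sin_kernel_bound_L2:
  fixes F U :: "real \<Rightarrow> real" and a y M :: real
  assumes [measurable]: "F \<in> borel_measurable lborel" "U \<in> borel_measurable lborel"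
    and "a \<noteq> 0" "0 \<le> y" "0 \<le> M" and bound: "AE z in lborel. \<bar>F z\<bar> \<le> M"
  shows "(\<integral>\<^sup>+z\<in>{0..y}. ennreal (\<bar>F z\<bar> * \<bar>sin (a * (y - z))\<bar> * \<bar>U z\<bar>) \<partial>lborel)\<^sup>2
    \<le> ennreal (M\<^sup>2) * (\<integral>\<^sup>+z\<in>{0..y}. ennreal ((U z)\<^sup>2) \<partial>lborel) * ennreal (sin_sq_mass a y)"
proof -
  define Y where "Y = (\<integral>\<^sup>+z\<in>{0..y}. ennreal (\<bar>sin (a * (y - z))\<bar> * \<bar>U z\<bar>) \<partial>lborel)"
  have "(\<integral>\<^sup>+z\<in>{0..y}. ennreal (\<bar>F z\<bar> * \<bar>sin (a * (y - z))\<bar> * \<bar>U z\<bar>) \<partial>lborel)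
      \<le> (\<integral>\<^sup>+z. ennreal M * (ennreal (\<bar>sin (a * (y - z))\<bar> * \<bar>U z\<bar>) * indicator {0..y} z) \<partial>lborel)"
  proof (rule nn_integral_mono_AE, rule eventually_mono[OF bound])
    fix z assume "\<bar>F z\<bar> \<le> M"
    then have "\<bar>F z\<bar> * (\<bar>sin (a * (y - z))\<bar> * \<bar>U z\<bar>) \<le> M * (\<bar>sin (a * (y - z))\<bar> * \<bar>U z\<bar>)"
      by (rule mult_right_mono) simp
    then show "ennreal (\<bar>F z\<bar> * \<bar>sin (a * (y - z))\<bar> * \<bar>U z\<bar>) * indicator {0..y} z
        \<le> ennreal M * (ennreal (\<bar>sin (a * (y - z))\<bar> * \<bar>U z\<bar>) * indicator {0..y} z)"
      using \<open>0 \<le> M\<close> by (auto simp: ennreal_mult'[symmetric] mult.assoc intro!: ennreal_leI split: split_indicator)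
  qed
  also have "\<dots> = ennreal M * Y"
    unfolding Y_def by (rule nn_integral_cmult) measurable
  finally have "(\<integral>\<^sup>+z\<in>{0..y}. ennreal (\<bar>F z\<bar> * \<bar>sin (a * (y - z))\<bar> * \<bar>U z\<bar>) \<partial>lborel)\<^sup>2
      \<le> (ennreal M * Y)\<^sup>2"
    by (rule power_mono) simp
  also have "\<dots> = ennreal (M\<^sup>2) * Y\<^sup>2"
    using \<open>0 \<le> M\<close> by (simp add: power_mult_distrib ennreal_power)
  also have "\<dots> \<le> ennreal (M\<^sup>2) * ((\<integral>\<^sup>+z\<in>{0..y}. ennreal ((U z)\<^sup>2) \<partial>lborel)
      * (\<integral>\<^sup>+z\<in>{0..y}. ennreal ((sin (a * (y - z)))\<^sup>2) \<partial>lborel))"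
    using Cauchy_Schwarz_set_nn_integral[of "\<lambda>z. sin (a * (y - z))" lborel U "{0..y}"]
    unfolding Y_def by (intro mult_left_mono) (auto simp: mult.commute)
  also have "(\<integral>\<^sup>+z\<in>{0..y}. ennreal ((sin (a * (y - z)))\<^sup>2) \<partial>lborel) = ennreal (sin_sq_mass a y)"
    using \<open>a \<noteq> 0\<close> \<open>0 \<le> y\<close> by (rule set_nn_integral_sin_sq)
  finally show ?thesis
    by (simp add: ac_simps)
qed

lemma sin_kernel_bound_L4:
  fixes F U :: "real \<Rightarrow> real" and a y :: real
  assumes [measurable]: "F \<in> borel_measurable lborel" "U \<in> borel_measurable lborel"
    and "a \<noteq> 0" "0 \<le> y"
  shows "(\<integral>\<^sup>+z\<in>{0..y}. ennreal (\<bar>F z\<bar> * \<bar>sin (a * (y - z))\<bar> * \<bar>U z\<bar>) \<partial>lborel) ^ 4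
    \<le> (\<integral>\<^sup>+z\<in>{0..y}. ennreal ((F z) ^ 4) \<partial>lborel) * (\<integral>\<^sup>+z\<in>{0..y}. ennreal ((U z) ^ 4) \<partial>lborel)
      * ennreal ((sin_sq_mass a y)\<^sup>2)"
proof -
  define P where "P = (\<integral>\<^sup>+z\<in>{0..y}. ennreal ((F z * U z)\<^sup>2) \<partial>lborel)"
  have "(\<integral>\<^sup>+z\<in>{0..y}. ennreal (\<bar>F z\<bar> * \<bar>sin (a * (y - z))\<bar> * \<bar>U z\<bar>) \<partial>lborel)
      = (\<integral>\<^sup>+z\<in>{0..y}. ennreal (\<bar>F z * U z\<bar> * \<bar>sin (a * (y - z))\<bar>) \<partial>lborel)"
    by (simp add: abs_mult ac_simps)
  also have "\<dots>\<^sup>2 \<le> P * (\<integral>\<^sup>+z\<in>{0..y}. ennreal ((sin (a * (y - z)))\<^sup>2) \<partial>lborel)"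
    unfolding P_def by (rule Cauchy_Schwarz_set_nn_integral) auto
  also have "(\<integral>\<^sup>+z\<in>{0..y}. ennreal ((sin (a * (y - z)))\<^sup>2) \<partial>lborel) = ennreal (sin_sq_mass a y)"
    using \<open>a \<noteq> 0\<close> \<open>0 \<le> y\<close> by (rule set_nn_integral_sin_sq)
  finally have X2: "(\<integral>\<^sup>+z\<in>{0..y}. ennreal (\<bar>F z\<bar> * \<bar>sin (a * (y - z))\<bar> * \<bar>U z\<bar>) \<partial>lborel)\<^sup>2
      \<le> P * ennreal (sin_sq_mass a y)" .
  have "P = (\<integral>\<^sup>+z\<in>{0..y}. ennreal (\<bar>(F z)\<^sup>2\<bar> * \<bar>(U z)\<^sup>2\<bar>) \<partial>lborel)"
    unfolding P_def by (simp add: power_mult_distrib)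
  also have "\<dots>\<^sup>2 \<le> (\<integral>\<^sup>+z\<in>{0..y}. ennreal ((F z) ^ 4) \<partial>lborel) * (\<integral>\<^sup>+z\<in>{0..y}. ennreal ((U z) ^ 4) \<partial>lborel)"
    using Cauchy_Schwarz_set_nn_integral[of "\<lambda>z. (F z)\<^sup>2" lborel "\<lambda>z. (U z)\<^sup>2" "{0..y}"]
    by (simp flip: power_mult)
  finally have P2: "P\<^sup>2 \<le> (\<integral>\<^sup>+z\<in>{0..y}. ennreal ((F z) ^ 4) \<partial>lborel)
      * (\<integral>\<^sup>+z\<in>{0..y}. ennreal ((U z) ^ 4) \<partial>lborel)" .
  have "(\<integral>\<^sup>+z\<in>{0..y}. ennreal (\<bar>F z\<bar> * \<bar>sin (a * (y - z))\<bar> * \<bar>U z\<bar>) \<partial>lborel) ^ 4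
      = ((\<integral>\<^sup>+z\<in>{0..y}. ennreal (\<bar>F z\<bar> * \<bar>sin (a * (y - z))\<bar> * \<bar>U z\<bar>) \<partial>lborel)\<^sup>2)\<^sup>2"
    by (simp flip: power_mult)
  also have "\<dots> \<le> (P * ennreal (sin_sq_mass a y))\<^sup>2"
    using X2 by (rule power_mono) simp
  also have "\<dots> = P\<^sup>2 * ennreal ((sin_sq_mass a y)\<^sup>2)"
    using sin_sq_mass_nonneg[OF \<open>a \<noteq> 0\<close> \<open>0 \<le> y\<close>] by (simp add: power_mult_distrib ennreal_power)
  also have "\<dots> \<le> (\<integral>\<^sup>+z\<in>{0..y}. ennreal ((F z) ^ 4) \<partial>lborel)
      * (\<integral>\<^sup>+z\<in>{0..y}. ennreal ((U z) ^ 4) \<partial>lborel) * ennreal ((sin_sq_mass a y)\<^sup>2)"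
    using P2 by (rule mult_right_mono) simp
  finally show ?thesis .
qed

section \<open>Bounds for the operator\<close>

text \<open>\<open>Q\<close> and \<open>u\<close> are only measurable on \<open>]0,B[\<close>; their zero extensions are measurable on the
  whole line and change the integrand of \<open>K_op\<close> only at \<open>z = 0\<close>.\<close>

lemma K_op_abs_le:
  fixes Q u :: "real \<Rightarrow> real"
  assumes "y \<in> {0<..<B}"
  shows "ennreal \<bar>K_op Q lam u y\<bar> \<le> (\<integral>\<^sup>+z\<in>{0..y}. ennreal (\<bar>indicator {0<..<B} z * Q z\<bar>
    * \<bar>sin (sqrt lam * (y - z))\<bar> * \<bar>indicator {0<..<B} z * u z\<bar>) \<partial>lborel)"
proof -
  define f where "f z = indicator {0..y} z *\<^sub>R (Q z * sin (sqrt lam * (y - z)) * u z)" for z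
  have K: "K_op Q lam u y = integral\<^sup>L lborel f"
    unfolding K_op_def set_lebesgue_integral_def f_def ..
  have "ennreal \<bar>K_op Q lam u y\<bar> \<le> (\<integral>\<^sup>+z. ennreal (norm (f z)) \<partial>lborel)"
  proof (cases "integrable lborel f")
    case True
    then show ?thesis
      using integral_norm_bound_ennreal[OF True] by (simp add: K)
  next
    case False
    then show ?thesis
      by (simp add: K not_integrable_integral_eq)
  qed
  also have "\<dots> = (\<integral>\<^sup>+z\<in>{0..y}. ennreal (\<bar>indicator {0<..<B} z * Q z\<bar>
      * \<bar>sin (sqrt lam * (y - z))\<bar> * \<bar>indicator {0<..<B} z * u z\<bar>) \<partial>lborel)"
  proof (rule nn_integral_cong_AE, rule eventually_mono[OF AE_lborel_singleton[of 0]])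
    fix z :: real assume "z \<noteq> 0"
    then have "z \<in> {0..y} \<Longrightarrow> z \<in> {0<..<B}"
      using assms by auto
    then show "ennreal (norm (f z)) = ennreal (\<bar>indicator {0<..<B} z * Q z\<bar>
      * \<bar>sin (sqrt lam * (y - z))\<bar> * \<bar>indicator {0<..<B} z * u z\<bar>) * indicator {0..y} z"
      by (auto simp: f_def abs_mult split: split_indicator)
  qed
  finally show ?thesis .
qed

lemma K_op_L2_pointwise:
  fixes Q u :: "real \<Rightarrow> real" and B lam M y :: real
  assumes "0 < lam" and Q: "Q \<in> borel_measurable (restrict_space lborel {0<..<B})"
    and "0 \<le> M" and bound: "AE z in lborel. z \<in> {0<..<B} \<longrightarrow> \<bar>Q z\<bar> \<le> M"
    and u: "in_Lp 2 {0<..<B} u" and y: "y \<in> {0<..<B}"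
  shows "\<bar>K_op Q lam u y\<bar> powr 2
    \<le> M\<^sup>2 * (LINT z:{0<..<B}|lborel. \<bar>u z\<bar> powr 2) * sin_sq_mass (sqrt lam) y"
proof -
  define IU where "IU = (LINT z:{0<..<B}|lborel. \<bar>u z\<bar> powr 2)"
  have "0 \<le> IU"
    unfolding IU_def by (rule set_integral_abs_powr_nonneg)
  have "0 \<le> sin_sq_mass (sqrt lam) y"
    using \<open>0 < lam\<close> y by (intro sin_sq_mass_nonneg) auto
  have [measurable]: "(\<lambda>z. indicator {0<..<B} z * Q z) \<in> borel_measurable lborel"
    "(\<lambda>z. indicator {0<..<B} z * u z) \<in> borel_measurable lborel"
    using Q u by (simp_all add: in_Lp_def borel_measurable_restrict_space_iff)
  have "AE z in lborel. \<bar>indicator {0<..<B} z * Q z\<bar> \<le> M"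
    using bound by eventually_elim (simp add: \<open>0 \<le> M\<close> split: split_indicator)
  note kernel = sin_kernel_bound_L2[OF _ _ _ _ \<open>0 \<le> M\<close> this]
  have "ennreal (\<bar>K_op Q lam u y\<bar>\<^sup>2) = (ennreal \<bar>K_op Q lam u y\<bar>)\<^sup>2"
    by (simp add: ennreal_power)
  also have "\<dots> \<le> (\<integral>\<^sup>+z\<in>{0..y}. ennreal (\<bar>indicator {0<..<B} z * Q z\<bar>
      * \<bar>sin (sqrt lam * (y - z))\<bar> * \<bar>indicator {0<..<B} z * u z\<bar>) \<partial>lborel)\<^sup>2"
    using K_op_abs_le[OF y] by (rule power_mono) simp
  also have "\<dots> \<le> ennreal (M\<^sup>2) * (\<integral>\<^sup>+z\<in>{0..y}. ennreal (\<bar>indicator {0<..<B} z * u z\<bar> powr 2) \<partial>lborel)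
      * ennreal (sin_sq_mass (sqrt lam) y)"
    using kernel \<open>0 < lam\<close> y by (simp add: abs_powr_numeral)
  also have "\<dots> \<le> ennreal (M\<^sup>2) * ennreal IU * ennreal (sin_sq_mass (sqrt lam) y)"
    unfolding IU_def using set_nn_integral_le_Lp_integral[OF u]
    by (intro mult_right_mono mult_left_mono) auto
  also have "\<dots> = ennreal (M\<^sup>2 * IU * sin_sq_mass (sqrt lam) y)"
    using \<open>0 \<le> IU\<close> \<open>0 \<le> sin_sq_mass (sqrt lam) y\<close> by (simp add: ennreal_mult)
  finally show ?thesis
    using \<open>0 \<le> IU\<close> \<open>0 \<le> sin_sq_mass (sqrt lam) y\<close>
    by (subst (asm) ennreal_le_iff) (auto simp: IU_def abs_powr_numeral)
qed

lemma K_op_L4_pointwise: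
  fixes Q u :: "real \<Rightarrow> real" and B lam y :: real
  assumes "0 < lam" and Q: "in_Lp 4 {0<..<B} Q" and u: "in_Lp 4 {0<..<B} u"
    and y: "y \<in> {0<..<B}"
  shows "\<bar>K_op Q lam u y\<bar> powr 4
    \<le> (LINT z:{0<..<B}|lborel. \<bar>Q z\<bar> powr 4) * (LINT z:{0<..<B}|lborel. \<bar>u z\<bar> powr 4)
      * (sin_sq_mass (sqrt lam) y)\<^sup>2"
proof -
  define IQ where "IQ = (LINT z:{0<..<B}|lborel. \<bar>Q z\<bar> powr 4)"
  define IU where "IU = (LINT z:{0<..<B}|lborel. \<bar>u z\<bar> powr 4)"
  have "0 \<le> IQ" "0 \<le> IU"
    unfolding IQ_def IU_def by (rule set_integral_abs_powr_nonneg)+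
  have [measurable]: "(\<lambda>z. indicator {0<..<B} z * Q z) \<in> borel_measurable lborel"
    "(\<lambda>z. indicator {0<..<B} z * u z) \<in> borel_measurable lborel"
    using Q u by (simp_all add: in_Lp_def borel_measurable_restrict_space_iff)
  have "ennreal (\<bar>K_op Q lam u y\<bar> ^ 4) = ennreal \<bar>K_op Q lam u y\<bar> ^ 4"
    by (simp add: ennreal_power)
  also have "\<dots> \<le> (\<integral>\<^sup>+z\<in>{0..y}. ennreal (\<bar>indicator {0<..<B} z * Q z\<bar>
      * \<bar>sin (sqrt lam * (y - z))\<bar> * \<bar>indicator {0<..<B} z * u z\<bar>) \<partial>lborel) ^ 4"
    using K_op_abs_le[OF y] by (rule power_mono) simp
  also have "\<dots> \<le> (\<integral>\<^sup>+z\<in>{0..y}. ennreal (\<bar>indicator {0<..<B} z * Q z\<bar> powr 4) \<partial>lborel)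
      * (\<integral>\<^sup>+z\<in>{0..y}. ennreal (\<bar>indicator {0<..<B} z * u z\<bar> powr 4) \<partial>lborel)
      * ennreal ((sin_sq_mass (sqrt lam) y)\<^sup>2)"
    using sin_kernel_bound_L4[of "\<lambda>z. indicator {0<..<B} z * Q z" "\<lambda>z. indicator {0<..<B} z * u z"
        "sqrt lam" y] \<open>0 < lam\<close> y
    by (simp add: abs_powr_numeral)
  also have "\<dots> \<le> ennreal IQ * ennreal IU * ennreal ((sin_sq_mass (sqrt lam) y)\<^sup>2)"
    unfolding IQ_def IU_def
    using set_nn_integral_le_Lp_integral[OF Q] set_nn_integral_le_Lp_integral[OF u]
    by (intro mult_right_mono mult_mono) auto
  also have "\<dots> = ennreal (IQ * IU * (sin_sq_mass (sqrt lam) y)\<^sup>2)"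
    using \<open>0 \<le> IQ\<close> \<open>0 \<le> IU\<close> by (simp add: ennreal_mult)
  finally show ?thesis
    using \<open>0 \<le> IQ\<close> \<open>0 \<le> IU\<close>
    by (subst (asm) ennreal_le_iff) (auto simp: IQ_def IU_def abs_powr_numeral)
qed

lemma K_op_L2_integral_bound:
  fixes Q u :: "real \<Rightarrow> real" and B lam M :: real
  assumes "0 < B" "0 < lam" and Q: "Q \<in> borel_measurable (restrict_space lborel {0<..<B})"
    and "0 \<le> M" and bound: "AE z in lborel. z \<in> {0<..<B} \<longrightarrow> \<bar>Q z\<bar> \<le> M"
    and u: "in_Lp 2 {0<..<B} u"
  shows "(LINT y:{0<..<B}|lborel. \<bar>K_op Q lam u y\<bar> powr 2)
    \<le> M\<^sup>2 * (B\<^sup>2 / 4) * (LINT y:{0<..<B}|lborel. \<bar>u y\<bar> powr 2)"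
proof -
  define IU where "IU = (LINT y:{0<..<B}|lborel. \<bar>u y\<bar> powr 2)"
  have "0 \<le> IU"
    unfolding IU_def by (rule set_integral_abs_powr_nonneg)
  have S: "set_integrable lborel {0<..<B} (sin_sq_mass (sqrt lam))"
    "(LINT y:{0<..<B}|lborel. sin_sq_mass (sqrt lam) y) \<le> B\<^sup>2 / 4"
    using set_integral_sin_sq_mass_le[of "sqrt lam" B] \<open>0 < lam\<close> \<open>0 < B\<close> by auto
  have "(LINT y:{0<..<B}|lborel. \<bar>K_op Q lam u y\<bar> powr 2)
      \<le> M\<^sup>2 * IU * (LINT y:{0<..<B}|lborel. sin_sq_mass (sqrt lam) y)"
  proof (rule set_integral_le_mult_bound[OF S(1)])
    fix y assume "y \<in> {0<..<B}"
    then show "\<bar>K_op Q lam u y\<bar> powr 2 \<le> M\<^sup>2 * IU * sin_sq_mass (sqrt lam) y"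
      "0 \<le> sin_sq_mass (sqrt lam) y"
      using K_op_L2_pointwise[OF \<open>0 < lam\<close> Q \<open>0 \<le> M\<close> bound u] \<open>0 < lam\<close>
      by (auto simp: IU_def intro: sin_sq_mass_nonneg)
  qed (use \<open>0 \<le> IU\<close> in simp)
  also have "\<dots> \<le> M\<^sup>2 * IU * (B\<^sup>2 / 4)"
    using S(2) \<open>0 \<le> IU\<close> by (intro mult_left_mono) auto
  finally show ?thesis
    by (simp add: IU_def ac_simps)
qed

lemma K_op_L4_integral_bound:
  fixes Q u :: "real \<Rightarrow> real" and B lam :: real
  assumes "0 < B" "0 < lam" and Q: "in_Lp 4 {0<..<B} Q" and u: "in_Lp 4 {0<..<B} u"
  shows "(LINT y:{0<..<B}|lborel. \<bar>K_op Q lam u y\<bar> powr 4)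
    \<le> (B ^ 3 / 12 + 5 * B / (32 * lam) + 5 / (32 * lam powr (3 / 2)))
      * (LINT y:{0<..<B}|lborel. \<bar>Q y\<bar> powr 4) * (LINT y:{0<..<B}|lborel. \<bar>u y\<bar> powr 4)"
proof -
  define C where "C = B ^ 3 / 12 + 5 * B / (32 * lam) + 5 / (32 * lam powr (3 / 2))"
  define IQ where "IQ = (LINT y:{0<..<B}|lborel. \<bar>Q y\<bar> powr 4)"
  define IU where "IU = (LINT y:{0<..<B}|lborel. \<bar>u y\<bar> powr 4)"
  have "0 \<le> IQ" "0 \<le> IU"
    unfolding IQ_def IU_def by (rule set_integral_abs_powr_nonneg)+
  have "sqrt lam = lam powr (1 / 2)"
    using \<open>0 < lam\<close> by (simp add: powr_half_sqrt)
  then have "sqrt lam ^ 3 = lam powr (1 / 2) * lam powr (1 / 2) * lam powr (1 / 2)"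
    by (simp add: power3_eq_cube)
  also have "\<dots> = lam powr (1 / 2 + 1 / 2 + 1 / 2)"
    by (simp only: powr_add)
  finally have sqrt3: "sqrt lam ^ 3 = lam powr (3 / 2)"
    by simp
  have sqrt2: "(sqrt lam)\<^sup>2 = lam"
    using \<open>0 < lam\<close> by simp
  have "0 < sqrt lam" "0 \<le> B"
    using \<open>0 < lam\<close> \<open>0 < B\<close> by simp_all
  note S = set_integral_sin_sq_mass_squared_le[OF this, unfolded sqrt2 sqrt3, folded C_def]
  have "(LINT y:{0<..<B}|lborel. \<bar>K_op Q lam u y\<bar> powr 4)
      \<le> IQ * IU * (LINT y:{0<..<B}|lborel. (sin_sq_mass (sqrt lam) y)\<^sup>2)"
  proof (rule set_integral_le_mult_bound[OF S(1)])
    fix y assume "y \<in> {0<..<B}"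
    then show "\<bar>K_op Q lam u y\<bar> powr 4 \<le> IQ * IU * (sin_sq_mass (sqrt lam) y)\<^sup>2"
      using K_op_L4_pointwise[OF \<open>0 < lam\<close> Q u] by (simp add: IQ_def IU_def)
  qed (use \<open>0 \<le> IQ\<close> \<open>0 \<le> IU\<close> in simp_all)
  also have "\<dots> \<le> IQ * IU * C"
    using S(2) \<open>0 \<le> IQ\<close> \<open>0 \<le> IU\<close> by (intro mult_left_mono) simp_all
  finally show ?thesis
    by (simp add: C_def IQ_def IU_def ac_simps)
qed

lemma op_norm_K_op_L2:
  fixes Q :: "real \<Rightarrow> real" and B lam :: real
  assumes "0 < B" "0 < lam" and Q: "Q \<in> borel_measurable (restrict_space lborel {0<..<B})"
  shows "op_norm 2 {0<..<B} (K_op Q lam) ^ 2 \<le> ereal (B\<^sup>2 / 4) * Linf_norm {0<..<B} Q ^ 2"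
proof (cases "Linf_norm {0<..<B} Q")
  case (real m)
  define M where "M = max m 0"
  have "0 \<le> M" "M\<^sup>2 \<le> m\<^sup>2"
    by (auto simp: M_def max_def)
  have bound: "AE z in lborel. z \<in> {0<..<B} \<longrightarrow> \<bar>Q z\<bar> \<le> M"
    using AE_abs_le_Linf_norm[OF real] by (auto simp: M_def elim: eventually_mono)
  have "op_norm (real 2) {0<..<B} (K_op Q lam) ^ 2 \<le> ereal (M\<^sup>2 * (B\<^sup>2 / 4))"
    using K_op_L2_integral_bound[OF assms \<open>0 \<le> M\<close> bound] \<open>0 < B\<close>
    by (intro op_norm_pow_le) simp_all
  also have "\<dots> \<le> ereal (B\<^sup>2 / 4) * Linf_norm {0<..<B} Q ^ 2"
    using \<open>M\<^sup>2 \<le> m\<^sup>2\<close> real by (simp add: mult.commute mult_left_mono)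
  finally show ?thesis
    by simp
qed (use \<open>0 < B\<close> in simp_all)

lemma op_norm_K_op_L4:
  fixes Q :: "real \<Rightarrow> real" and B lam :: real
  assumes "0 < B" "0 < lam" and Q: "in_Lp 4 {0<..<B} Q"
  shows "op_norm 4 {0<..<B} (K_op Q lam) ^ 4
    \<le> ereal ((B ^ 3 / 12 + 5 * B / (32 * lam) + 5 / (32 * lam powr (3 / 2))) * Lp_norm 4 {0<..<B} Q ^ 4)"
proof -
  define IQ where "IQ = (LINT y:{0<..<B}|lborel. \<bar>Q y\<bar> powr 4)"
  have "0 \<le> IQ"
    unfolding IQ_def by (rule set_integral_abs_powr_nonneg)
  have "Lp_norm 4 {0<..<B} Q ^ 4 = IQ"
    using powr_inverse_power[OF \<open>0 \<le> IQ\<close>, of 4] by (simp add: Lp_norm_def IQ_def)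
  moreover have "op_norm (real 4) {0<..<B} (K_op Q lam) ^ 4
      \<le> ereal ((B ^ 3 / 12 + 5 * B / (32 * lam) + 5 / (32 * lam powr (3 / 2))) * IQ)"
    using K_op_L4_integral_bound[OF assms] \<open>0 < B\<close> \<open>0 < lam\<close> \<open>0 \<le> IQ\<close>
    by (intro op_norm_pow_le) (simp_all add: IQ_def)
  ultimately show ?thesis
    by simp
qed

theorem lemma2p1:
  fixes L :: real and p w q :: "real \<Rightarrow> real"
  assumes "L > 0"
    and "C2_on 0 L p" and "C2_on 0 L w"
    and "\<forall>x\<in>{0..L}. p x > 0" and "\<forall>x\<in>{0..L}. w x > 0"
    and "Linf_norm {0<..<L} (\<lambda>x. 1 / p x) < \<infinity>"
    and "Linf_norm {0<..<L} (\<lambda>x. 1 / w x) < \<infinity>"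
    and "continuous_on {0..L} q" and "\<forall>x\<in>{0..L}. q x \<ge> 0"
  defines "B \<equiv> integral {0..L} (\<lambda>s. sqrt (w s / p s))"
    and "Q \<equiv> liou_Q L p w q"
  shows "\<forall>lam::real. lam > 0 \<longrightarrow>
           op_norm 2 {0<..<B} (K_op Q lam) ^ 2 \<le> ereal (B^2 / 4) * Linf_norm {0<..<B} Q ^ 2
         \<and> op_norm 4 {0<..<B} (K_op Q lam) ^ 4
             \<le> ereal ((B^3 / 12 + 5 * B / (32 * lam) + 5 / (32 * lam powr (3/2)))
                       * Lp_norm 4 {0<..<B} Q ^ 4)"
proof (intro allI impI)
  fix lam :: real assume "0 < lam"
  have B: "B = liou_y p w L"
    by (simp add: B_def liou_y_def)
  have "0 < B"
    unfolding B using assms(1,4,5)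
    by (intro liou_x_properties(1)) (simp_all add: assms(2,3) C1_on_imp_continuous_on C2_on_imp_C1_on)
  obtain Qc where Qc: "continuous_on {0..B} Qc" "\<forall>y\<in>{0<..<B}. Q y = Qc y"
    using liou_Q_continuous_extension[OF assms(1-5,8)] unfolding B Q_def by blast
  have "in_Lp 2 {0<..<B} Q" "in_Lp 4 {0<..<B} Q"
    by (rule in_Lp_of_continuous_extension[OF Qc]; simp)+
  then show "op_norm 2 {0<..<B} (K_op Q lam) ^ 2 \<le> ereal (B^2 / 4) * Linf_norm {0<..<B} Q ^ 2
    \<and> op_norm 4 {0<..<B} (K_op Q lam) ^ 4
      \<le> ereal ((B^3 / 12 + 5 * B / (32 * lam) + 5 / (32 * lam powr (3/2))) * Lp_norm 4 {0<..<B} Q ^ 4)"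
    using op_norm_K_op_L2[OF \<open>0 < B\<close> \<open>0 < lam\<close>] op_norm_K_op_L4[OF \<open>0 < B\<close> \<open>0 < lam\<close>]
    by (simp add: in_Lp_def)
qed

end
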